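(* Let $(\mathcal{S},\mathcal{A},P,r,\gamma)$ be a discounted Markov decision process with finite state set $\mathcal{S}$ of size $n$, finite action set $\mathcal{A}$, transition probabilities $P(s'\mid s,a)$, expected rewards $r(s,a)$ and discount factor $\gamma\in[0,1)$. Let $V^*$ be the optimal value function and suppose: (i) (uniqueness of the optimal policy) there is a deterministic policy $\pi^*$ and a number $\delta>0$ such that for every state $s$ and every action $a'\neq \pi^*(s)$, $$ r(s,\pi^*(s))+\gamma\sum_{s'}P(s'\mid s,\pi^*(s))V^*(s') - r(s,a') - \gamma\sum_{s'}P(s'\mid s,a')V^*(s') \ge \delta;$$ (ii) the Markov chain with transition matrix $P^*(s,s')=P(s'\mid s,\pi^*(s))$ is irreducible and aperiodic. Let $N\ge 1$ be an integer such that all entries of $(P^* )^N$ are strictly positive. Run synchronous value iteration without learning rate from an initial vector $V_0\in\mathbb{R}^{\mathcal{S}}$, i.e. $V_{t+1}(s)=\max_{a}\big[r(s,a)+\gamma\sum_{s'}P(s'\mid s,a)V_t(s')\big]$ for all $s$, and let $e_t=V_t-V^*$. Then there exists $\tau\in(0,1)$ such that $$\operatorname{span}(e_N)\le \gamma^N\,\tau\,\operatorname{span}(e_0).$$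
   Context: For a vector $e\in\mathbb{R}^{\mathcal{S}}$, $\operatorname{span}(e)=\max_s e(s)-\min_s e(s)$. The optimal value function is $V^*(s)=\max_\pi \mathbb{E}\big[\sum_{t\ge0}\gamma^t r(s_t,\pi(s_t))\mid s_0=s\big]$. Such an $N$ exists under (ii) (e.g. $N=n^2-2n+2$ works). The constant $\tau$ may depend on the MDP and on the initial vector $V_0$. *)

theory Defs
  imports Complex_Main
begin

text \<open>A finite MDP: states of finite type 's, actions of finite type 'a,
  transition kernel P s a s' = P(s' | s,a), rewards r s a, discount g.\<close>

definition stochastic :: "('s::finite \<Rightarrow> 'a \<Rightarrow> 's \<Rightarrow> real) \<Rightarrow> bool" where
  "stochastic P \<longleftrightarrow> (\<forall>s a s'. P s a s' \<ge> 0) \<and> (\<forall>s a. (\<Sum>s'\<in>UNIV. P s a s') = 1)"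

fun policy_pow :: "('s::finite \<Rightarrow> 'a \<Rightarrow> 's \<Rightarrow> real) \<Rightarrow> ('s \<Rightarrow> 'a) \<Rightarrow> nat \<Rightarrow> 's \<Rightarrow> 's \<Rightarrow> real" where
  "policy_pow P pol 0 s s' = (if s = s' then 1 else 0)"
| "policy_pow P pol (Suc t) s s' = (\<Sum>u\<in>UNIV. P s (pol s) u * policy_pow P pol t u s')"

text \<open>Value of a deterministic stationary policy:
  E[ sum_t g^t r(s_t, pol(s_t)) | s_0 = s ].\<close>
definition policy_value ::
  "('s::finite \<Rightarrow> 'a \<Rightarrow> 's \<Rightarrow> real) \<Rightarrow> ('s \<Rightarrow> 'a \<Rightarrow> real) \<Rightarrow> real \<Rightarrow> ('s \<Rightarrow> 'a) \<Rightarrow> 's \<Rightarrow> real" where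
  "policy_value P r g pol s =
     (\<Sum>t. g ^ t * (\<Sum>s'\<in>UNIV. policy_pow P pol t s s' * r s' (pol s')))"

definition opt_value ::
  "('s::finite \<Rightarrow> 'a::finite \<Rightarrow> 's \<Rightarrow> real) \<Rightarrow> ('s \<Rightarrow> 'a \<Rightarrow> real) \<Rightarrow> real \<Rightarrow> 's \<Rightarrow> real" where
  "opt_value P r g s = Max (range (\<lambda>pol. policy_value P r g pol s))"

definition bellman ::
  "('s::finite \<Rightarrow> 'a::finite \<Rightarrow> 's \<Rightarrow> real) \<Rightarrow> ('s \<Rightarrow> 'a \<Rightarrow> real) \<Rightarrow> real \<Rightarrow> ('s \<Rightarrow> real) \<Rightarrow> 's \<Rightarrow> real" where
  "bellman P r g V s = Max (range (\<lambda>a. r s a + g * (\<Sum>s'\<in>UNIV. P s a s' * V s')))"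

fun value_iter ::
  "('s::finite \<Rightarrow> 'a::finite \<Rightarrow> 's \<Rightarrow> real) \<Rightarrow> ('s \<Rightarrow> 'a \<Rightarrow> real) \<Rightarrow> real \<Rightarrow> ('s \<Rightarrow> real) \<Rightarrow> nat \<Rightarrow> 's \<Rightarrow> real" where
  "value_iter P r g V0 0 = V0"
| "value_iter P r g V0 (Suc t) = bellman P r g (value_iter P r g V0 t)"

definition span :: "('s::finite \<Rightarrow> real) \<Rightarrow> real" where
  "span e = Max (range e) - Min (range e)"

fun mpow :: "('s::finite \<Rightarrow> 's \<Rightarrow> real) \<Rightarrow> nat \<Rightarrow> 's \<Rightarrow> 's \<Rightarrow> real" where
  "mpow M 0 s s' = (if s = s' then 1 else 0)"
| "mpow M (Suc k) s s' = (\<Sum>u\<in>UNIV. M s u * mpow M k u s')"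

definition irreducible_chain :: "('s::finite \<Rightarrow> 's \<Rightarrow> real) \<Rightarrow> bool" where
  "irreducible_chain M \<longleftrightarrow> (\<forall>s s'. \<exists>k. mpow M k s s' > 0)"

definition period :: "('s::finite \<Rightarrow> 's \<Rightarrow> real) \<Rightarrow> 's \<Rightarrow> nat" where
  "period M s = Gcd {k. k > 0 \<and> mpow M k s s > 0}"

definition aperiodic_chain :: "('s::finite \<Rightarrow> 's \<Rightarrow> real) \<Rightarrow> bool" where
  "aperiodic_chain M \<longleftrightarrow> (\<forall>s. period M s = 1)"

end

theory Submission
  imports Defs
begin

(* Condition (i) makes pistar greedy for the optimal value function Vstar, so Vstar is the value
  of pistar and a fixed point of the Bellman operator T.  Let P be the transition matrix of
  pistar and e_k = V_k - Vstar.  No action has a larger Q-value than Vstar with respect to Vstar,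
  so e_(k+1) <= gamma * max e_k; and T V_k dominates the Q-value of pistar, so
  e_(k+1) >= gamma * P e_k.  After N steps, max e_N <= gamma^N max e_0 and
  e_N >= gamma^N P^N e_0.  If c > 0 is the smallest entry of P^N, every row of P^N puts weight
  at least c on a maximiser of e_0, so min e_N >= gamma^N (min e_0 + c span e_0), and therefore
  span e_N <= gamma^N (1 - c) span e_0. *)

definition prob_vector :: "('s::finite \<Rightarrow> real) \<Rightarrow> bool" where
  "prob_vector p \<longleftrightarrow> (\<forall>s. 0 \<le> p s) \<and> sum p UNIV = 1"

definition stochastic_matrix :: "('s::finite \<Rightarrow> 's \<Rightarrow> real) \<Rightarrow> bool" where
  "stochastic_matrix M \<longleftrightarrow> (\<forall>s. prob_vector (M s))"

definition qvalue ::
  "('s::finite \<Rightarrow> 'a \<Rightarrow> 's \<Rightarrow> real) \<Rightarrow> ('s \<Rightarrow> 'a \<Rightarrow> real) \<Rightarrow> real \<Rightarrow> ('s \<Rightarrow> real) \<Rightarrow> 's \<Rightarrow> 'a \<Rightarrow> real" where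
  "qvalue P r g V s a = r s a + g * (\<Sum>s'\<in>UNIV. P s a s' * V s')"

lemma stochastic_iff_prob_vector: "stochastic P \<longleftrightarrow> (\<forall>s a. prob_vector (P s a))"
  unfolding stochastic_def prob_vector_def by blast

lemma stochastic_matrix_policy: "stochastic P \<Longrightarrow> stochastic_matrix (\<lambda>s. P s (pol s))"
  by (simp add: stochastic_iff_prob_vector stochastic_matrix_def)

lemma prob_vector_average_le:
  assumes "prob_vector p" and "\<And>s. e s \<le> m"
  shows "(\<Sum>s\<in>UNIV. p s * e s) \<le> m"
proof -
  have "(\<Sum>s\<in>UNIV. p s * e s) \<le> (\<Sum>s\<in>UNIV. p s * m)"
    using assms by (intro sum_mono mult_left_mono) (auto simp: prob_vector_def)
  also have "\<dots> = m"
    using assms(1) by (simp add: prob_vector_def sum_distrib_right[symmetric])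
  finally show ?thesis .
qed

lemma prob_vector_average_ge_Min:
  assumes p: "prob_vector p" and c: "\<And>s. c \<le> p s"
  shows "Min (range e) + c * (Max (range e) - Min (range e)) \<le> (\<Sum>s\<in>UNIV. p s * e s)"
proof -
  obtain smax where smax: "e smax = Max (range e)"
    by (metis (mono_tags) Max_in finite UNIV_not_empty finite_imageI image_is_empty imageE)
  have Min_le: "Min (range e) \<le> e s" for s
    by (rule Min_le) auto
  have "c * (Max (range e) - Min (range e)) \<le> p smax * (e smax - Min (range e))"
    unfolding smax[symmetric] using Min_le[of smax] c[of smax] by (intro mult_right_mono) auto
  also have "\<dots> \<le> (\<Sum>s\<in>UNIV. p s * (e s - Min (range e)))"
    using p Min_le by (intro member_le_sum mult_nonneg_nonneg) (auto simp: prob_vector_def)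
  also have "\<dots> = (\<Sum>s\<in>UNIV. p s * e s) - Min (range e)"
    using p by (simp add: prob_vector_def right_diff_distrib sum_subtractf sum_distrib_right[symmetric])
  finally show ?thesis by simp
qed

lemma mpow_0_apply: "(\<Sum>s'\<in>UNIV. mpow M 0 s s' * v s') = v s"
  by (simp add: of_bool_def[symmetric])

lemma mpow_Suc_apply:
  "(\<Sum>s'\<in>UNIV. mpow M (Suc k) s s' * v s') = (\<Sum>u\<in>UNIV. M s u * (\<Sum>s'\<in>UNIV. mpow M k u s' * v s'))"
proof -
  have "(\<Sum>s'\<in>UNIV. mpow M (Suc k) s s' * v s') = (\<Sum>s'\<in>UNIV. \<Sum>u\<in>UNIV. M s u * mpow M k u s' * v s')"
    by (simp add: sum_distrib_right)
  also have "\<dots> = (\<Sum>u\<in>UNIV. \<Sum>s'\<in>UNIV. M s u * mpow M k u s' * v s')"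
    by (rule sum.swap)
  finally show ?thesis
    by (simp add: sum_distrib_left mult.assoc)
qed

lemma stochastic_matrix_mpow:
  assumes "stochastic_matrix M"
  shows "stochastic_matrix (mpow M k)"
proof (induction k)
  case 0
  show ?case
    by (simp add: stochastic_matrix_def prob_vector_def of_bool_def[symmetric])
next
  case (Suc k)
  have "0 \<le> mpow M (Suc k) s s'" for s s'
    using assms Suc.IH by (auto simp: stochastic_matrix_def prob_vector_def intro!: sum_nonneg)
  moreover have "(\<Sum>s'\<in>UNIV. mpow M (Suc k) s s') = 1" for s
    using mpow_Suc_apply[of M k s "\<lambda>_. 1"] assms Suc.IH
    by (simp add: stochastic_matrix_def prob_vector_def)
  ultimately show ?case
    by (simp add: stochastic_matrix_def prob_vector_def)
qed

lemma policy_pow_eq_mpow: "policy_pow P pol t = mpow (\<lambda>s. P s (pol s)) t"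
  by (induction t) (auto simp: fun_eq_iff)

lemma discounted_mpow_summable:
  assumes M: "stochastic_matrix M" and g: "0 \<le> g" "g < 1"
  shows "summable (\<lambda>t. g ^ t * (\<Sum>s'\<in>UNIV. mpow M t s s' * \<rho> s'))"
proof (rule summable_comparison_test)
  define B where "B = Max (range (\<lambda>s. \<bar>\<rho> s\<bar>))"
  have bound: "\<bar>\<Sum>s'\<in>UNIV. mpow M t s s' * \<rho> s'\<bar> \<le> B" for t
  proof -
    have "\<bar>\<Sum>s'\<in>UNIV. mpow M t s s' * \<rho> s'\<bar> \<le> (\<Sum>s'\<in>UNIV. mpow M t s s' * \<bar>\<rho> s'\<bar>)"
      using stochastic_matrix_mpow[OF M]
      by (auto simp: stochastic_matrix_def prob_vector_def abs_mult intro: order.trans[OF sum_abs])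
    also have "\<dots> \<le> B"
      using stochastic_matrix_mpow[OF M] unfolding B_def stochastic_matrix_def
      by (intro prob_vector_average_le Max_ge) auto
    finally show ?thesis .
  qed
  show "\<exists>N. \<forall>t\<ge>N. norm (g ^ t * (\<Sum>s'\<in>UNIV. mpow M t s s' * \<rho> s')) \<le> B * g ^ t"
  proof (intro exI allI impI)
    fix t :: nat
    have "g ^ t * \<bar>\<Sum>s'\<in>UNIV. mpow M t s s' * \<rho> s'\<bar> \<le> g ^ t * B"
      using g by (intro mult_left_mono bound) simp
    then show "norm (g ^ t * (\<Sum>s'\<in>UNIV. mpow M t s s' * \<rho> s')) \<le> B * g ^ t"
      using g by (simp add: abs_mult mult.commute)
  qed
  show "summable (\<lambda>t. B * g ^ t)"
    using g by (intro summable_mult summable_geometric) simp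
qed

lemma discounted_mpow_series_fixpoint:
  fixes \<rho> :: "'s::finite \<Rightarrow> real"
  assumes M: "stochastic_matrix M" and g: "0 \<le> g" "g < 1"
  defines "v \<equiv> \<lambda>s. \<Sum>t. g ^ t * (\<Sum>s'\<in>UNIV. mpow M t s s' * \<rho> s')"
  shows "v s = \<rho> s + g * (\<Sum>u\<in>UNIV. M s u * v u)"
proof -
  note summable = discounted_mpow_summable[OF assms(1-3)]
  have "(\<Sum>t. g ^ Suc t * (\<Sum>s'\<in>UNIV. mpow M (Suc t) s s' * \<rho> s'))
      = (\<Sum>t. g * (\<Sum>u\<in>UNIV. M s u * (g ^ t * (\<Sum>s'\<in>UNIV. mpow M t u s' * \<rho> s'))))"
    by (simp only: mpow_Suc_apply) (simp add: sum_distrib_left mult_ac)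
  also have "\<dots> = g * (\<Sum>u\<in>UNIV. \<Sum>t. M s u * (g ^ t * (\<Sum>s'\<in>UNIV. mpow M t u s' * \<rho> s')))"
    using summable by (simp add: suminf_mult summable_sum summable_mult suminf_sum)
  also have "\<dots> = g * (\<Sum>u\<in>UNIV. M s u * v u)"
    using summable by (simp add: v_def suminf_mult)
  finally show ?thesis
    using suminf_split_head[OF summable[of s]]
    by (simp add: v_def mpow_0_apply del: mpow.simps(1))
qed

lemma policy_value_eq_qvalue:
  assumes "stochastic P" and "0 \<le> g" "g < 1"
  shows "policy_value P r g pol s = qvalue P r g (policy_value P r g pol) s (pol s)"
  unfolding policy_value_def policy_pow_eq_mpow qvalue_def
  by (rule discounted_mpow_series_fixpoint[OF stochastic_matrix_policy[OF assms(1)] assms(2,3)])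

lemma policy_value_le_opt_value: "policy_value P r g pol s \<le> opt_value P r g s"
  unfolding opt_value_def by (rule Max_ge) auto

lemma opt_value_attained:
  obtains pol where "opt_value P r g s = policy_value P r g pol s"
proof -
  have "opt_value P r g s \<in> range (\<lambda>pol. policy_value P r g pol s)"
    unfolding opt_value_def by (rule Max_in) auto
  then show ?thesis using that by blast
qed

lemma qvalue_le_bellman: "qvalue P r g V s a \<le> bellman P r g V s"
  unfolding bellman_def qvalue_def by (rule Max_ge) auto

lemma bellman_attained:
  obtains a where "bellman P r g V s = qvalue P r g V s a"
proof -
  have "bellman P r g V s \<in> range (qvalue P r g V s)"
    unfolding bellman_def qvalue_def by (rule Max_in) auto
  then show ?thesis using that by blast
qed

lemma qvalue_diff:
  "qvalue P r g V s a - qvalue P r g W s a = g * (\<Sum>s'\<in>UNIV. P s a s' * (V s' - W s'))"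
  by (simp add: qvalue_def algebra_simps sum_subtractf)

lemma qvalue_mono:
  assumes "stochastic P" and "0 \<le> g" and "\<And>s. V s \<le> W s"
  shows "qvalue P r g V s a \<le> qvalue P r g W s a"
  using assms unfolding qvalue_def stochastic_def
  by (intro add_left_mono mult_left_mono sum_mono) auto

lemma nonpos_if_le_discounted_average:
  assumes M: "stochastic_matrix M" and g: "0 \<le> g" "g < 1"
    and D: "\<And>s. D s \<le> g * (\<Sum>s'\<in>UNIV. M s s' * D s')"
  shows "D s \<le> 0"
proof -
  obtain smax where smax: "D smax = Max (range D)"
    by (metis (mono_tags) Max_in finite UNIV_not_empty finite_imageI image_is_empty imageE)
  have D_le: "D s' \<le> D smax" for s'
    unfolding smax by (rule Max_ge) auto
  have "(\<Sum>s'\<in>UNIV. M smax s' * D s') \<le> D smax"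
    using M D_le unfolding stochastic_matrix_def by (intro prob_vector_average_le) auto
  then have "D smax \<le> g * D smax"
    using D[of smax] g by (meson order.trans mult_left_mono)
  then have "D smax \<le> 0"
    using g by (simp add: mult_le_cancel_right1)
  then show ?thesis
    using D_le[of s] by linarith
qed

lemma opt_value_eq_policy_value_if_greedy:
  assumes st: "stochastic P" and g: "0 \<le> g" "g < 1"
    and greedy: "\<And>s a. qvalue P r g (opt_value P r g) s a \<le> qvalue P r g (opt_value P r g) s (pol s)"
  shows "opt_value P r g s = policy_value P r g pol s"
proof -
  let ?V = "opt_value P r g" and ?W = "policy_value P r g pol"
  have "?V s - ?W s \<le> g * (\<Sum>s'\<in>UNIV. P s (pol s) s' * (?V s' - ?W s'))" for s
  proof -
    obtain pol' where pol': "?V s = policy_value P r g pol' s"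
      using opt_value_attained .
    have "?V s = qvalue P r g (policy_value P r g pol') s (pol' s)"
      unfolding pol' using policy_value_eq_qvalue[OF st g] .
    also have "\<dots> \<le> qvalue P r g ?V s (pol' s)"
      using st g by (intro qvalue_mono policy_value_le_opt_value)
    also have "\<dots> \<le> qvalue P r g ?V s (pol s)"
      by (rule greedy)
    finally show ?thesis
      using qvalue_diff[of P r g ?V s "pol s" ?W] policy_value_eq_qvalue[OF st g, of r pol s]
      by linarith
  qed
  then have "?V s - ?W s \<le> 0"
    using nonpos_if_le_discounted_average[OF stochastic_matrix_policy[OF st] g, of "\<lambda>s. ?V s - ?W s"]
    by blast
  then show ?thesis
    using policy_value_le_opt_value[of P r g pol s] by linarith
qed

lemma value_iter_error_upper:
  assumes st: "stochastic P" and g: "0 \<le> g"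
    and V: "\<And>s a. qvalue P r g V s a \<le> V s"
    and m: "\<And>s. V0 s - V s \<le> m"
  shows "value_iter P r g V0 k s - V s \<le> g ^ k * m"
proof (induction k arbitrary: s)
  case 0
  show ?case using m by simp
next
  case (Suc k)
  let ?W = "value_iter P r g V0 k"
  obtain a where a: "value_iter P r g V0 (Suc k) s = qvalue P r g ?W s a"
    using bellman_attained by (metis value_iter.simps(2))
  have "value_iter P r g V0 (Suc k) s - V s \<le> qvalue P r g ?W s a - qvalue P r g V s a"
    using a V[of s a] by linarith
  also have "\<dots> = g * (\<Sum>s'\<in>UNIV. P s a s' * (?W s' - V s'))"
    by (rule qvalue_diff)
  also have "\<dots> \<le> g * (g ^ k * m)"
    using st g Suc.IH unfolding stochastic_iff_prob_vector
    by (intro mult_left_mono prob_vector_average_le) auto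
  finally show ?case by simp
qed

lemma value_iter_error_lower:
  assumes st: "stochastic P" and g: "0 \<le> g"
    and V: "\<And>s. V s = qvalue P r g V s (pol s)"
  shows "g ^ k * (\<Sum>s'\<in>UNIV. mpow (\<lambda>s. P s (pol s)) k s s' * (V0 s' - V s'))
           \<le> value_iter P r g V0 k s - V s"
proof (induction k arbitrary: s)
  case 0
  show ?case by (simp add: mpow_0_apply del: mpow.simps(1))
next
  case (Suc k)
  let ?W = "value_iter P r g V0 k" and ?M = "\<lambda>s. P s (pol s)"
  have "g ^ Suc k * (\<Sum>s'\<in>UNIV. mpow ?M (Suc k) s s' * (V0 s' - V s'))
      = g * (\<Sum>u\<in>UNIV. P s (pol s) u * (g ^ k * (\<Sum>s'\<in>UNIV. mpow ?M k u s' * (V0 s' - V s'))))"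
    by (simp only: mpow_Suc_apply) (simp add: sum_distrib_left mult_ac)
  also have "\<dots> \<le> g * (\<Sum>u\<in>UNIV. P s (pol s) u * (?W u - V u))"
    using st g Suc.IH unfolding stochastic_def
    by (intro mult_left_mono sum_mono) auto
  also have "\<dots> = qvalue P r g ?W s (pol s) - V s"
    using qvalue_diff V[of s] by metis
  also have "\<dots> \<le> value_iter P r g V0 (Suc k) s - V s"
    using qvalue_le_bellman by simp
  finally show ?case .
qed

lemma span_nonneg: "0 \<le> span e"
  using Min_le[of "range e" "e s"] Max_ge[of "range e" "e s"] unfolding span_def by auto

lemma span_contraction_by_minorization:
  assumes A: "stochastic_matrix A" and c: "\<And>s s'. c \<le> A s s'" and \<gamma>: "0 \<le> \<gamma>"
    and upper: "\<And>s. e' s \<le> \<gamma> * Max (range e)"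
    and lower: "\<And>s. \<gamma> * (\<Sum>s'\<in>UNIV. A s s' * e s') \<le> e' s"
  shows "span e' \<le> \<gamma> * (1 - c) * span e"
proof -
  have "Max (range e') \<le> \<gamma> * Max (range e)"
    using upper by (intro Max.boundedI) auto
  moreover have "\<gamma> * (Min (range e) + c * (Max (range e) - Min (range e))) \<le> Min (range e')"
  proof (intro Min.boundedI)
    fix y assume "y \<in> range e'"
    then obtain s where "y = e' s" by blast
    moreover have "Min (range e) + c * (Max (range e) - Min (range e)) \<le> (\<Sum>s'\<in>UNIV. A s s' * e s')"
      using A c unfolding stochastic_matrix_def by (intro prob_vector_average_ge_Min) auto
    ultimately show "\<gamma> * (Min (range e) + c * (Max (range e) - Min (range e))) \<le> y"
      using lower[of s] \<gamma> by (meson order.trans mult_left_mono)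
  qed auto
  moreover have "\<gamma> * (1 - c) * (Max (range e) - Min (range e))
      = \<gamma> * Max (range e) - \<gamma> * (Min (range e) + c * (Max (range e) - Min (range e)))"
    by (simp add: algebra_simps)
  ultimately show ?thesis
    unfolding span_def by linarith
qed

theorem theorem1:
  fixes P :: "'s::finite \<Rightarrow> 'a::finite \<Rightarrow> 's \<Rightarrow> real"
    and r :: "'s \<Rightarrow> 'a \<Rightarrow> real"
    and g :: real
    and pistar :: "'s \<Rightarrow> 'a"
    and \<delta> :: real
    and N :: nat
    and V0 :: "'s \<Rightarrow> real"
  assumes stoch: "stochastic P"
    and g_nonneg: "0 \<le> g" and g_lt1: "g < 1"
    and delta_pos: "\<delta> > 0"
    and unique_opt: "\<forall>s a'. a' \<noteq> pistar s \<longrightarrow>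
        r s (pistar s) + g * (\<Sum>s'\<in>UNIV. P s (pistar s) s' * opt_value P r g s')
        - r s a' - g * (\<Sum>s'\<in>UNIV. P s a' s' * opt_value P r g s') \<ge> \<delta>"
    and irred: "irreducible_chain (\<lambda>s s'. P s (pistar s) s')"
    and aper: "aperiodic_chain (\<lambda>s s'. P s (pistar s) s')"
    and N_ge1: "N \<ge> 1"
    and N_pos: "\<forall>s s'. mpow (\<lambda>s s'. P s (pistar s) s') N s s' > 0"
  shows "\<exists>\<tau>. 0 < \<tau> \<and> \<tau> < 1 \<and>
     span (\<lambda>s. value_iter P r g V0 N s - opt_value P r g s)
       \<le> g ^ N * \<tau> * span (\<lambda>s. V0 s - opt_value P r g s)"
proof -
  let ?V = "opt_value P r g" and ?M = "\<lambda>s. P s (pistar s)"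
  have greedy: "qvalue P r g ?V s a \<le> qvalue P r g ?V s (pistar s)" for s a
    using unique_opt[rule_format, of a s] delta_pos by (cases "a = pistar s") (auto simp: qvalue_def)
  have optimal: "?V = policy_value P r g pistar"
    by (intro ext opt_value_eq_policy_value_if_greedy[OF stoch g_nonneg g_lt1 greedy])
  have fixpoint: "?V s = qvalue P r g ?V s (pistar s)" for s
    unfolding optimal by (rule policy_value_eq_qvalue[OF stoch g_nonneg g_lt1])
  have below_fixpoint: "qvalue P r g ?V s a \<le> ?V s" for s a
    using greedy[of s a] fixpoint[of s] by linarith
  define c where "c = Min (range (case_prod (mpow ?M N)))"
  have c_le: "c \<le> mpow ?M N s s'" for s s'
    unfolding c_def by (rule Min_le) auto
  have c_pos: "0 < c"
    using Min_in[of "range (case_prod (mpow ?M N))"] N_pos unfolding c_def by auto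
  have "span (\<lambda>s. value_iter P r g V0 N s - ?V s) \<le> g ^ N * (1 - c) * span (\<lambda>s. V0 s - ?V s)"
  proof (rule span_contraction_by_minorization[OF stochastic_matrix_mpow[OF stochastic_matrix_policy[OF stoch]] c_le])
    show "value_iter P r g V0 N s - ?V s \<le> g ^ N * Max (range (\<lambda>s. V0 s - ?V s))" for s
      by (rule value_iter_error_upper[OF stoch g_nonneg below_fixpoint]) (rule Max_ge, auto)
    show "g ^ N * (\<Sum>s'\<in>UNIV. mpow ?M N s s' * (V0 s' - ?V s')) \<le> value_iter P r g V0 N s - ?V s" for s
      using fixpoint by (rule value_iter_error_lower[OF stoch g_nonneg])
  qed (use g_nonneg in simp)
  \<comment> \<open>With a single state \<open>c = 1\<close>, so \<open>1 - c\<close> may vanish; hence the \<open>max\<close>.\<close>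
  moreover have "g ^ N * (1 - c) * span (\<lambda>s. V0 s - ?V s) \<le> g ^ N * max (1 - c) (1 / 2) * span (\<lambda>s. V0 s - ?V s)"
    using g_nonneg span_nonneg by (intro mult_right_mono mult_left_mono) auto
  ultimately show ?thesis
    using c_pos by (intro exI[of _ "max (1 - c) (1 / 2)"]) auto
qed

end
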